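(* Let $\mathcal H=\bigoplus_{n\ge 0}\mathcal H_n$ be a commutative graded connected Hopf algebra over $\mathbb C$ (so $\mathcal H_0=\mathbb C\cdot 1$), and for $X\in\mathcal H_n$, $n\ge1$, write the coproduct as $$\Delta(X)=X\otimes 1+1\otimes X+\sum X'\otimes X'',$$ where $\sum X'\otimes X''\in\bigoplus_{1\le p\le n-1}\mathcal H_p\otimes\mathcal H_{n-p}$. Let $\phi:\mathcal H\to\mathcal R$ be a unital algebra homomorphism. Define linear maps $\phi_-,\phi_+:\mathcal H\to\mathcal R$ by $\phi_\pm(1)=1$ and, recursively on the degree, for homogeneous $X$ of degree $\ge1$, $$\phi_-(X)=-T\Big(\phi(X)+\sum\phi_-(X')\,\phi(X'')\Big),\qquad \phi_+(X)=\phi(X)+\phi_-(X)+\sum\phi_-(X')\,\phi(X'').$$ Then $\phi_-$ and $\phi_+$ are unital algebra homomorphisms, $\phi_-(X)\in\mathcal R_-$ for every $X$ of positive degree, $\phi_+(\mathcal H)\subset\mathcal R_+$, and $\phi_+=\phi_-\star\phi$. Equivalently, in terms of the corresponding loops with values in the group $G$ of characters of $\mathcal H$, the loop $\gamma$ associated with $\phi$ admits the Birkhoff decomposition $\gamma(z)=\gamma_-(z)^{-1}\gamma_+(z)$, where $\gamma_\pm$ correspond to $\phi_\pm$.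
   Context: Fix $z_0\in\mathbb C$. $\mathcal R$ denotes the algebra of germs at $z_0$ of meromorphic functions of the complex variable $z$; $\mathcal R_+\subset\mathcal R$ is the subalgebra of germs holomorphic at $z_0$, and $\mathcal R_-=(z-z_0)^{-1}\mathbb C[(z-z_0)^{-1}]$ is the space of polynomials in $(z-z_0)^{-1}$ without constant term, so that $\mathcal R=\mathcal R_-\oplus\mathcal R_+$. $T:\mathcal R\to\mathcal R_-$ is the projection onto $\mathcal R_-$ parallel to $\mathcal R_+$ (extraction of the polar part). The convolution of linear maps $\psi_1,\psi_2:\mathcal H\to\mathcal R$ is $\psi_1\star\psi_2=m\circ(\psi_1\otimes\psi_2)\circ\Delta$, where $m$ is the multiplication of $\mathcal R$. Algebra homomorphisms $\mathcal H\to\mathcal R$ correspond to (germs of) meromorphic loops $z\mapsto\gamma(z)$ in the group $G$ of characters of $\mathcal H$, convolution corresponding to pointwise product of loops; $\phi(\mathcal H_{>0})\subset \mathcal R_-$ means the loop extends holomorphically to $\mathbb C\setminus\{z_0\}$ with value $1$ at $\infty$, and $\phi(\mathcal H)\subset\mathcal R_+$ means the loop is holomorphic at $z_0$. *)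

theory Defs
  imports "HOL-Complex_Analysis.Complex_Analysis" "HOL-Library.Poly_Mapping"
begin

text \<open>A complex vector space with basis indexed by the type 'a is represented as the
  finitely supported functions 'a to complex. The tensor product of the spaces with bases
  'a and 'b is then the space with basis 'a times 'b.\<close>

definition pm_smult :: "complex \<Rightarrow> ('a \<Rightarrow>\<^sub>0 complex) \<Rightarrow> ('a \<Rightarrow>\<^sub>0 complex)" where
  "pm_smult c p = Poly_Mapping.map (\<lambda>v. c * v) p"

definition pm_lext :: "('a \<Rightarrow> ('c \<Rightarrow>\<^sub>0 complex)) \<Rightarrow> ('a \<Rightarrow>\<^sub>0 complex) \<Rightarrow> ('c \<Rightarrow>\<^sub>0 complex)" where
  "pm_lext f x = (\<Sum>a\<in>Poly_Mapping.keys x. pm_smult (Poly_Mapping.lookup x a) (f a))"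

definition bvec :: "'a \<Rightarrow> ('a \<Rightarrow>\<^sub>0 complex)" where
  "bvec a = Poly_Mapping.single a 1"

definition c_lext :: "('a \<Rightarrow> complex) \<Rightarrow> ('a \<Rightarrow>\<^sub>0 complex) \<Rightarrow> complex" where
  "c_lext f x = (\<Sum>a\<in>Poly_Mapping.keys x. Poly_Mapping.lookup x a * f a)"

definition tens :: "('a \<Rightarrow>\<^sub>0 complex) \<Rightarrow> ('b \<Rightarrow>\<^sub>0 complex) \<Rightarrow> ('a \<times> 'b \<Rightarrow>\<^sub>0 complex)" where
  "tens x y = pm_lext (\<lambda>a. pm_lext (\<lambda>b. bvec (a, b)) y) x"

definition hmul :: "('b \<Rightarrow> 'b \<Rightarrow> ('b \<Rightarrow>\<^sub>0 complex)) \<Rightarrow> ('b \<Rightarrow>\<^sub>0 complex) \<Rightarrow> ('b \<Rightarrow>\<^sub>0 complex) \<Rightarrow> ('b \<Rightarrow>\<^sub>0 complex)" where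
  "hmul mu x y = pm_lext (\<lambda>a. pm_lext (\<lambda>b. mu a b) y) x"

definition tmul :: "('b \<Rightarrow> 'b \<Rightarrow> ('b \<Rightarrow>\<^sub>0 complex)) \<Rightarrow> ('b \<times> 'b \<Rightarrow>\<^sub>0 complex) \<Rightarrow> ('b \<times> 'b \<Rightarrow>\<^sub>0 complex) \<Rightarrow> ('b \<times> 'b \<Rightarrow>\<^sub>0 complex)" where
  "tmul mu s t = pm_lext (\<lambda>(a, b). pm_lext (\<lambda>(c, d). tens (mu a c) (mu b d)) t) s"

definition Delta :: "('b \<Rightarrow> ('b \<times> 'b \<Rightarrow>\<^sub>0 complex)) \<Rightarrow> ('b \<Rightarrow>\<^sub>0 complex) \<Rightarrow> ('b \<times> 'b \<Rightarrow>\<^sub>0 complex)" where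
  "Delta cop x = pm_lext cop x"

definition Delta_id :: "('b \<Rightarrow> ('b \<times> 'b \<Rightarrow>\<^sub>0 complex)) \<Rightarrow> ('b \<times> 'b \<Rightarrow>\<^sub>0 complex) \<Rightarrow> ('b \<times> 'b \<times> 'b \<Rightarrow>\<^sub>0 complex)" where
  "Delta_id cop t = pm_lext (\<lambda>(u, v). pm_lext (\<lambda>(p, q). bvec (p, q, v)) (cop u)) t"

definition id_Delta :: "('b \<Rightarrow> ('b \<times> 'b \<Rightarrow>\<^sub>0 complex)) \<Rightarrow> ('b \<times> 'b \<Rightarrow>\<^sub>0 complex) \<Rightarrow> ('b \<times> 'b \<times> 'b \<Rightarrow>\<^sub>0 complex)" where
  "id_Delta cop t = pm_lext (\<lambda>(u, v). pm_lext (\<lambda>(p, q). bvec (u, p, q)) (cop v)) t"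

text \<open>A commutative graded connected Hopf algebra over the complex numbers, given by a
  homogeneous basis indexed by 'b with degree function deg; e is the basis vector equal to
  the unit 1; mu, cop, cou, ant give product, coproduct, counit and antipode on basis
  vectors.\<close>
definition graded_connected_comm_hopf ::
  "('b \<Rightarrow> nat) \<Rightarrow> ('b \<Rightarrow> 'b \<Rightarrow> ('b \<Rightarrow>\<^sub>0 complex)) \<Rightarrow> 'b \<Rightarrow> ('b \<Rightarrow> ('b \<times> 'b \<Rightarrow>\<^sub>0 complex))
    \<Rightarrow> ('b \<Rightarrow> complex) \<Rightarrow> ('b \<Rightarrow> ('b \<Rightarrow>\<^sub>0 complex)) \<Rightarrow> bool" where
  "graded_connected_comm_hopf deg mu e cop cou ant \<longleftrightarrow>
     \<comment> \<open>commutative unital associative algebra\<close>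
     (\<forall>x y z. hmul mu (hmul mu x y) z = hmul mu x (hmul mu y z)) \<and>
     (\<forall>x y. hmul mu x y = hmul mu y x) \<and>
     (\<forall>x. hmul mu (bvec e) x = x) \<and>
     \<comment> \<open>grading, connectedness\<close>
     (\<forall>a b. \<forall>c\<in>Poly_Mapping.keys (mu a b). deg c = deg a + deg b) \<and>
     (\<forall>b. deg b = 0 \<longleftrightarrow> b = e) \<and>
     (\<forall>b. \<forall>(u, v)\<in>Poly_Mapping.keys (cop b). deg u + deg v = deg b) \<and>
     \<comment> \<open>coalgebra\<close>
     (\<forall>x. Delta_id cop (Delta cop x) = id_Delta cop (Delta cop x)) \<and>
     (\<forall>x. pm_lext (\<lambda>(u, v). pm_smult (cou u) (bvec v)) (Delta cop x) = x) \<and>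
     (\<forall>x. pm_lext (\<lambda>(u, v). pm_smult (cou v) (bvec u)) (Delta cop x) = x) \<and>
     \<comment> \<open>bialgebra compatibility\<close>
     (\<forall>x y. Delta cop (hmul mu x y) = tmul mu (Delta cop x) (Delta cop y)) \<and>
     Delta cop (bvec e) = bvec (e, e) \<and>
     (\<forall>x y. c_lext cou (hmul mu x y) = c_lext cou x * c_lext cou y) \<and>
     cou e = 1 \<and>
     \<comment> \<open>antipode\<close>
     (\<forall>x. pm_lext (\<lambda>(u, v). hmul mu (ant u) (bvec v)) (Delta cop x)
            = pm_smult (c_lext cou x) (bvec e)) \<and>
     (\<forall>x. pm_lext (\<lambda>(u, v). hmul mu (bvec u) (ant v)) (Delta cop x)
            = pm_smult (c_lext cou x) (bvec e))"

text \<open>Reduced coproduct: Delta(b) - b (x) 1 - 1 (x) b, i.e. the sum of X' (x) X''.\<close>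
definition red_cop :: "('b \<Rightarrow> ('b \<times> 'b \<Rightarrow>\<^sub>0 complex)) \<Rightarrow> 'b \<Rightarrow> 'b \<Rightarrow> ('b \<times> 'b \<Rightarrow>\<^sub>0 complex)" where
  "red_cop cop e b = cop b - bvec (b, e) - bvec (e, b)"

text \<open>A germ at z0 of a meromorphic function is identified with its Laurent expansion in
  powers of (z - z0), a complex formal Laurent series (fls_X corresponds to z - z0).\<close>
definition germs :: "complex \<Rightarrow> complex fls set" where
  "germs z0 = {F. \<exists>f. (\<lambda>w. f (z0 + w)) has_laurent_expansion F}"

definition Rplus :: "complex \<Rightarrow> complex fls set" where
  "Rplus z0 = {F \<in> germs z0. \<forall>n::int. n < 0 \<longrightarrow> fls_nth F n = 0}"

text \<open>R_- : polynomials in (z - z0)^(-1) without constant term.\<close>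
definition Rminus :: "complex \<Rightarrow> complex fls set" where
  "Rminus z0 = {F \<in> germs z0. \<forall>n::int. n \<ge> 0 \<longrightarrow> fls_nth F n = 0}"

text \<open>T: projection onto R_- parallel to R_+ (polar part).\<close>
definition T :: "complex fls \<Rightarrow> complex fls" where
  "T F = F - fps_to_fls (fls_regpart F)"

definition r_lext :: "('b \<Rightarrow> complex fls) \<Rightarrow> ('b \<Rightarrow>\<^sub>0 complex) \<Rightarrow> complex fls" where
  "r_lext f x = (\<Sum>a\<in>Poly_Mapping.keys x. fls_const (Poly_Mapping.lookup x a) * f a)"

definition m_tensor :: "('b \<Rightarrow> complex fls) \<Rightarrow> ('b \<Rightarrow> complex fls) \<Rightarrow> ('b \<times> 'b \<Rightarrow>\<^sub>0 complex) \<Rightarrow> complex fls" where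
  "m_tensor f g t = (\<Sum>p\<in>Poly_Mapping.keys t. fls_const (Poly_Mapping.lookup t p) * f (fst p) * g (snd p))"

definition convolution :: "('b \<Rightarrow> ('b \<times> 'b \<Rightarrow>\<^sub>0 complex)) \<Rightarrow> ('b \<Rightarrow> complex fls) \<Rightarrow> ('b \<Rightarrow> complex fls)
    \<Rightarrow> ('b \<Rightarrow>\<^sub>0 complex) \<Rightarrow> complex fls" where
  "convolution cop f g x = m_tensor f g (Delta cop x)"

definition unital_alg_hom_R :: "complex \<Rightarrow> ('b \<Rightarrow> 'b \<Rightarrow> ('b \<Rightarrow>\<^sub>0 complex)) \<Rightarrow> 'b \<Rightarrow> ('b \<Rightarrow> complex fls) \<Rightarrow> bool" where
  "unital_alg_hom_R z0 mu e f \<longleftrightarrow>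
     (\<forall>b. f b \<in> germs z0) \<and>
     r_lext f (bvec e) = 1 \<and>
     (\<forall>x y. r_lext f (hmul mu x y) = r_lext f x * r_lext f y)"

end

theory Submission
  imports Defs
begin

text \<open>
  Unwinding the recursion, \<open>\<phi>\<^sub>+ = \<phi>\<^sub>- \<star> \<phi>\<close> on basis vectors, \<open>\<phi>\<^sub>-\<close> takes values in \<open>\<R>\<^sub>-\<close>,
  \<open>\<phi>\<^sub>+\<close> takes values in \<open>\<R>\<^sub>+\<close>, and \<open>\<phi>\<^sub>- = -T(\<phi>\<^sub>+ - \<phi>\<^sub>-)\<close> in positive degree.
  Multiplicativity of \<open>\<phi>\<^sub>-\<close> on basis vectors \<open>a, b\<close> follows by induction on \<open>deg a + deg b\<close>:
  expanding \<open>\<phi>\<^sub>+(ab) = (\<phi>\<^sub>- \<star> \<phi>)(ab)\<close> along \<open>\<Delta>(ab) = \<Delta>(a)\<Delta>(b)\<close> with the induction hypothesis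
  gives \<open>\<phi>\<^sub>+(ab) - \<phi>\<^sub>-(ab) = \<phi>\<^sub>+(a)\<phi>\<^sub>+(b) - \<phi>\<^sub>-(a)\<phi>\<^sub>-(b)\<close>. As \<open>\<R>\<^sub>+\<close> and \<open>\<R>\<^sub>-\<close> are
  subalgebras and \<open>T\<close> is the projection onto \<open>\<R>\<^sub>-\<close>, applying \<open>-T\<close> leaves
  \<open>\<phi>\<^sub>-(ab) = \<phi>\<^sub>-(a)\<phi>\<^sub>-(b)\<close>. Finally \<open>\<phi>\<^sub>+\<close>, a convolution of two characters of a
  commutative bialgebra, is a character.
\<close>

lemma lookup_pm_smult [simp]: "Poly_Mapping.lookup (pm_smult c p) k = c * Poly_Mapping.lookup p k"
  by (simp add: pm_smult_def Poly_Mapping.map.rep_eq when_def)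

lemma lookup_bvec: "Poly_Mapping.lookup (bvec a) k = (if k = a then 1 else 0)"
  by (simp add: bvec_def lookup_single)

lemma keys_bvec [simp]: "Poly_Mapping.keys (bvec a) = {a}"
  by (simp add: bvec_def)

lemma pm_smult_one [simp]: "pm_smult 1 p = p"
  by (rule poly_mapping_eqI) simp

lemma pm_lext_bvec [simp]: "pm_lext f (bvec a) = f a"
  by (simp add: pm_lext_def lookup_bvec)

lemma lookup_pm_lext:
  "Poly_Mapping.lookup (pm_lext g x) w =
     (\<Sum>p\<in>Poly_Mapping.keys x. Poly_Mapping.lookup x p * Poly_Mapping.lookup (g p) w)"
  by (simp add: pm_lext_def lookup_sum)

lemma r_lext_superset:
  assumes "finite S" "Poly_Mapping.keys x \<subseteq> S"
  shows "r_lext f x = (\<Sum>a\<in>S. fls_const (Poly_Mapping.lookup x a) * f a)"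
  unfolding r_lext_def
  by (rule sum.mono_neutral_left) (use assms in \<open>auto simp: in_keys_iff\<close>)

lemma r_lext_bvec [simp]: "r_lext f (bvec a) = f a"
  by (simp add: r_lext_def lookup_bvec)

lemma r_lext_zero [simp]: "r_lext f 0 = 0"
  by (simp add: r_lext_def)

lemma r_lext_add: "r_lext f (x + y) = r_lext f x + r_lext f y"
proof -
  let ?S = "Poly_Mapping.keys x \<union> Poly_Mapping.keys y"
  have "r_lext f (x + y) = (\<Sum>a\<in>?S. fls_const (Poly_Mapping.lookup (x + y) a) * f a)"
    using keys_add[of x y] by (intro r_lext_superset) auto
  also have "\<dots> = (\<Sum>a\<in>?S. fls_const (Poly_Mapping.lookup x a) * f a)
      + (\<Sum>a\<in>?S. fls_const (Poly_Mapping.lookup y a) * f a)"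
    by (simp add: lookup_add sum.distrib distrib_right flip: fls_plus_const)
  also have "\<dots> = r_lext f x + r_lext f y"
    by (simp add: r_lext_superset [symmetric])
  finally show ?thesis .
qed

lemma r_lext_diff: "r_lext f (x - y) = r_lext f x - r_lext f y"
proof -
  let ?S = "Poly_Mapping.keys x \<union> Poly_Mapping.keys y"
  have "r_lext f (x - y) = (\<Sum>a\<in>?S. fls_const (Poly_Mapping.lookup (x - y) a) * f a)"
    by (rule r_lext_superset) (auto simp: in_keys_iff lookup_minus)
  also have "\<dots> = (\<Sum>a\<in>?S. fls_const (Poly_Mapping.lookup x a) * f a)
      - (\<Sum>a\<in>?S. fls_const (Poly_Mapping.lookup y a) * f a)"
    by (simp add: lookup_minus sum_subtractf left_diff_distrib flip: fls_minus_const)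
  also have "\<dots> = r_lext f x - r_lext f y"
    by (simp add: r_lext_superset [symmetric])
  finally show ?thesis .
qed

lemma r_lext_pm_smult: "r_lext f (pm_smult c x) = fls_const c * r_lext f x"
proof -
  have "r_lext f (pm_smult c x) =
      (\<Sum>a\<in>Poly_Mapping.keys x. fls_const (Poly_Mapping.lookup (pm_smult c x) a) * f a)"
    by (rule r_lext_superset) (auto simp: in_keys_iff)
  also have "\<dots> = fls_const c * r_lext f x"
    by (simp add: r_lext_def sum_distrib_left mult.assoc flip: fls_const_mult_const)
  finally show ?thesis .
qed

lemma r_lext_sum: "r_lext f (sum g A) = (\<Sum>a\<in>A. r_lext f (g a))"
  by (induction A rule: infinite_finite_induct) (auto simp: r_lext_add)

lemma r_lext_pm_lext: "r_lext f (pm_lext g x) = r_lext (\<lambda>a. r_lext f (g a)) x"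
  by (simp add: pm_lext_def r_lext_sum r_lext_pm_smult) (simp add: r_lext_def)

lemma r_lext_cong: "(\<And>a. a \<in> Poly_Mapping.keys x \<Longrightarrow> f a = g a) \<Longrightarrow> r_lext f x = r_lext g x"
  by (simp add: r_lext_def)

lemma r_lext_mult_left: "r_lext (\<lambda>a. c * f a) x = c * r_lext f x"
  by (simp add: r_lext_def sum_distrib_left mult.left_commute)

lemma r_lext_mult_right: "r_lext (\<lambda>a. f a * c) x = r_lext f x * c"
  by (simp add: r_lext_def sum_distrib_right mult.assoc)

lemma r_lext_fun_add: "r_lext (\<lambda>a. f a + g a) x = r_lext f x + r_lext g x"
  by (simp add: r_lext_def sum.distrib distrib_left)

lemma r_lext_fun_diff: "r_lext (\<lambda>a. f a - g a) x = r_lext f x - r_lext g x"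
  by (simp add: r_lext_def sum_subtractf right_diff_distrib)

lemma r_lext_fun_uminus: "r_lext (\<lambda>a. - f a) x = - r_lext f x"
  by (simp add: r_lext_def sum_negf)

lemma r_lext_tensor_product:
  "r_lext (\<lambda>a. r_lext (\<lambda>b. f a * g b) y) x = r_lext f x * r_lext g y"
  by (simp add: r_lext_mult_left r_lext_mult_right)

lemma fls_nth_r_lext:
  "fls_nth (r_lext f x) n = (\<Sum>a\<in>Poly_Mapping.keys x. Poly_Mapping.lookup x a * fls_nth (f a) n)"
proof -
  have "fls_nth (sum g A) n = (\<Sum>a\<in>A. fls_nth (g a) n)" for g :: "'a \<Rightarrow> complex fls" and A
    by (induction A rule: infinite_finite_induct) auto
  then show ?thesis by (simp add: r_lext_def)
qed

lemma r_lext_hmul: "r_lext f (hmul mu x y) = r_lext (\<lambda>a. r_lext (\<lambda>b. r_lext f (mu a b)) y) x"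
  by (simp add: hmul_def r_lext_pm_lext)

lemma r_lext_hmul_multiplicative:
  assumes "\<And>a b. r_lext f (mu a b) = f a * f b"
  shows "r_lext f (hmul mu x y) = r_lext f x * r_lext f y"
  by (simp add: r_lext_hmul assms r_lext_tensor_product)

lemma m_tensor_eq_r_lext: "m_tensor f g t = r_lext (\<lambda>p. f (fst p) * g (snd p)) t"
  by (simp add: m_tensor_def r_lext_def mult.assoc)

lemma m_tensor_bvec: "m_tensor f g (bvec p) = f (fst p) * g (snd p)"
  by (simp add: m_tensor_eq_r_lext)

lemma m_tensor_add: "m_tensor f g (s + t) = m_tensor f g s + m_tensor f g t"
  by (simp add: m_tensor_eq_r_lext r_lext_add)

lemma m_tensor_diff: "m_tensor f g (s - t) = m_tensor f g s - m_tensor f g t"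
  by (simp add: m_tensor_eq_r_lext r_lext_diff)

lemma convolution_eq_r_lext: "convolution cop f g x = r_lext (\<lambda>c. m_tensor f g (cop c)) x"
  by (simp add: convolution_def Delta_def m_tensor_eq_r_lext r_lext_pm_lext)

lemma m_tensor_tmul:
  "m_tensor f g (tmul mu s t) =
     r_lext (\<lambda>p. r_lext (\<lambda>q. r_lext f (mu (fst p) (fst q)) * r_lext g (mu (snd p) (snd q))) t) s"
  by (simp add: tmul_def tens_def m_tensor_eq_r_lext r_lext_pm_lext case_prod_beta
      r_lext_tensor_product)

lemma m_tensor_tmul_add_left:
  "m_tensor f g (tmul mu (s + s') t) = m_tensor f g (tmul mu s t) + m_tensor f g (tmul mu s' t)"
  by (simp add: m_tensor_tmul r_lext_add)

lemma m_tensor_tmul_add_right: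
  "m_tensor f g (tmul mu s (t + t')) = m_tensor f g (tmul mu s t) + m_tensor f g (tmul mu s t')"
  by (simp add: m_tensor_tmul r_lext_add r_lext_fun_add)

lemma m_tensor_tmul_multiplicative:
  assumes "\<And>p q. p \<in> Poly_Mapping.keys s \<Longrightarrow> q \<in> Poly_Mapping.keys t \<Longrightarrow>
      r_lext f (mu (fst p) (fst q)) = f (fst p) * f (fst q)"
    and "\<And>p q. p \<in> Poly_Mapping.keys s \<Longrightarrow> q \<in> Poly_Mapping.keys t \<Longrightarrow>
      r_lext g (mu (snd p) (snd q)) = g (snd p) * g (snd q)"
  shows "m_tensor f g (tmul mu s t) = m_tensor f g s * m_tensor f g t"
proof -
  have "m_tensor f g (tmul mu s t) =
      r_lext (\<lambda>p. r_lext (\<lambda>q. (f (fst p) * g (snd p)) * (f (fst q) * g (snd q))) t) s"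
    unfolding m_tensor_tmul
    by (intro r_lext_cong) (simp add: assms mult_ac)
  then show ?thesis
    by (simp add: r_lext_tensor_product m_tensor_eq_r_lext)
qed

definition fls_regular :: "complex fls \<Rightarrow> bool" where
  "fls_regular F \<longleftrightarrow> (\<forall>n<0. fls_nth F n = 0)"

definition fls_polar :: "complex fls \<Rightarrow> bool" where
  "fls_polar F \<longleftrightarrow> (\<forall>n\<ge>0. fls_nth F n = 0)"

lemma Rplus_iff: "F \<in> Rplus z0 \<longleftrightarrow> F \<in> germs z0 \<and> fls_regular F"
  by (simp add: Rplus_def fls_regular_def)

lemma Rminus_iff: "F \<in> Rminus z0 \<longleftrightarrow> F \<in> germs z0 \<and> fls_polar F"
  by (simp add: Rminus_def fls_polar_def)

lemma fls_nth_T: "fls_nth (T F) n = (if n < 0 then fls_nth F n else 0)"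
  by (simp add: T_def)

lemma T_diff: "T (F - G) = T F - T G"
  by (rule fls_eqI) (simp add: fls_nth_T)

lemma fls_regular_diff_T: "fls_regular (F - T F)"
  by (simp add: fls_regular_def fls_nth_T)

lemma T_fls_regular: "fls_regular F \<Longrightarrow> T F = 0"
  by (intro fls_eqI) (simp add: fls_nth_T fls_regular_def)

lemma T_fls_polar: "fls_polar F \<Longrightarrow> T F = F"
  by (intro fls_eqI) (simp add: fls_nth_T fls_polar_def)

lemma r_lext_T: "r_lext (\<lambda>a. T (f a)) x = T (r_lext f x)"
  by (intro fls_eqI) (simp add: fls_nth_r_lext fls_nth_T)

lemma fls_regular_r_lext:
  "(\<And>a. a \<in> Poly_Mapping.keys x \<Longrightarrow> fls_regular (f a)) \<Longrightarrow> fls_regular (r_lext f x)"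
  by (simp add: fls_regular_def fls_nth_r_lext)

lemma fls_polar_r_lext:
  "(\<And>a. a \<in> Poly_Mapping.keys x \<Longrightarrow> fls_polar (f a)) \<Longrightarrow> fls_polar (r_lext f x)"
  by (simp add: fls_polar_def fls_nth_r_lext)

lemma fls_nth_mult_eq_0:
  fixes F G :: "complex fls"
  assumes "\<And>i. fls_nth F i = 0 \<or> fls_nth G (n - i) = 0"
  shows "fls_nth (F * G) n = 0"
  unfolding fls_times_nth(2) by (rule sum.neutral) (use assms in auto)

lemma fls_regular_mult: "fls_regular F \<Longrightarrow> fls_regular G \<Longrightarrow> fls_regular (F * G)"
  unfolding fls_regular_def
  by (metis diff_less_0_iff_less fls_nth_mult_eq_0 linorder_not_less order_le_less_trans)

lemma fls_polar_mult: "fls_polar F \<Longrightarrow> fls_polar G \<Longrightarrow> fls_polar (F * G)"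
  unfolding fls_polar_def
  by (intro allI impI fls_nth_mult_eq_0) (metis diff_ge_0_iff_ge linorder_not_less order.trans less_le)

lemma germs_iff_conv_radius: "F \<in> germs z0 \<longleftrightarrow> fls_conv_radius F > 0"
proof
  assume "F \<in> germs z0"
  then show "fls_conv_radius F > 0"
    by (auto simp: germs_def has_laurent_expansion_def)
next
  assume "fls_conv_radius F > 0"
  then have "eval_fls F has_laurent_expansion F"
    by (rule eval_fls_has_laurent_expansion)
  then show "F \<in> germs z0"
    unfolding germs_def by (intro CollectI exI[of _ "\<lambda>z. eval_fls F (z - z0)"]) simp
qed

lemma germs_add: "F \<in> germs z0 \<Longrightarrow> G \<in> germs z0 \<Longrightarrow> F + G \<in> germs z0"
  unfolding germs_iff_conv_radius by (rule less_le_trans [OF _ fls_conv_radius_add]) simp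

lemma germs_mult: "F \<in> germs z0 \<Longrightarrow> G \<in> germs z0 \<Longrightarrow> F * G \<in> germs z0"
  unfolding germs_iff_conv_radius by (rule less_le_trans [OF _ fls_conv_radius_mult]) simp

lemma germs_uminus: "F \<in> germs z0 \<Longrightarrow> - F \<in> germs z0"
  by (simp add: germs_iff_conv_radius)

lemma germs_const: "fls_const c \<in> germs z0"
  by (simp add: germs_iff_conv_radius)

lemma germs_zero: "0 \<in> germs z0"
  by (simp add: germs_iff_conv_radius)

lemma germs_T: "F \<in> germs z0 \<Longrightarrow> T F \<in> germs z0"
  using fls_conv_radius_diff[of F "fps_to_fls (fls_regpart F)"]
  by (auto simp: germs_iff_conv_radius T_def fps_conv_radius_fls_regpart)

lemma germs_r_lext:
  assumes "\<And>a. a \<in> Poly_Mapping.keys x \<Longrightarrow> f a \<in> germs z0"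
  shows "r_lext f x \<in> germs z0"
proof -
  have "(\<Sum>a\<in>A. fls_const (Poly_Mapping.lookup x a) * f a) \<in> germs z0"
    if "A \<subseteq> Poly_Mapping.keys x" for A
    using that
    by (induction A rule: infinite_finite_induct)
      (auto intro!: germs_zero germs_add germs_mult germs_const assms)
  then show ?thesis by (simp add: r_lext_def)
qed

locale graded_connected_hopf =
  fixes deg :: "'b \<Rightarrow> nat" and mu :: "'b \<Rightarrow> 'b \<Rightarrow> ('b \<Rightarrow>\<^sub>0 complex)" and e :: 'b
    and cop :: "'b \<Rightarrow> ('b \<times> 'b \<Rightarrow>\<^sub>0 complex)" and cou :: "'b \<Rightarrow> complex"
    and ant :: "'b \<Rightarrow> ('b \<Rightarrow>\<^sub>0 complex)"
  assumes hopf: "graded_connected_comm_hopf deg mu e cop cou ant"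
begin

lemma hmul_commute: "hmul mu x y = hmul mu y x"
  using hopf unfolding graded_connected_comm_hopf_def by (elim conjE allE) assumption

lemma hmul_unit_left: "hmul mu (bvec e) x = x"
  using hopf unfolding graded_connected_comm_hopf_def by (elim conjE allE) assumption

lemma deg_mu: "c \<in> Poly_Mapping.keys (mu a b) \<Longrightarrow> deg c = deg a + deg b"
  using hopf unfolding graded_connected_comm_hopf_def by (elim conjE allE) (erule bspec)

lemma deg_eq_0_iff: "deg b = 0 \<longleftrightarrow> b = e"
  using hopf unfolding graded_connected_comm_hopf_def by (elim conjE allE) assumption

lemma deg_cop: "(u, v) \<in> Poly_Mapping.keys (cop b) \<Longrightarrow> deg u + deg v = deg b"
  using hopf unfolding graded_connected_comm_hopf_def
  by (elim conjE allE) (drule bspec, assumption, simp)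

lemma Delta_hmul: "Delta cop (hmul mu x y) = tmul mu (Delta cop x) (Delta cop y)"
  using hopf unfolding graded_connected_comm_hopf_def by (elim conjE allE) assumption

lemma counit_unit: "cou e = 1"
  using hopf unfolding graded_connected_comm_hopf_def by (elim conjE) assumption

lemma counit_right: "pm_lext (\<lambda>(u, v). pm_smult (cou v) (bvec u)) (cop b) = bvec b"
proof -
  have "pm_lext (\<lambda>(u, v). pm_smult (cou v) (bvec u)) (Delta cop (bvec b)) = bvec b"
    using hopf unfolding graded_connected_comm_hopf_def by (elim conjE allE) assumption
  then show ?thesis by (simp add: Delta_def)
qed

lemma cop_unit: "cop e = bvec (e, e)"
proof -
  have "Delta cop (bvec e) = bvec (e, e)"
    using hopf unfolding graded_connected_comm_hopf_def by (elim conjE) assumption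
  then show ?thesis by (simp add: Delta_def)
qed

lemma mu_unit_left: "mu e b = bvec b"
  using hmul_unit_left[of "bvec b"] by (simp add: hmul_def)

lemma mu_unit_right: "mu a e = bvec a"
  using hmul_commute[of "bvec a" "bvec e"] by (simp add: hmul_unit_left) (simp add: hmul_def)

lemma deg_unit: "deg e = 0"
  by (simp add: deg_eq_0_iff)

lemma deg_ge_1: "b \<noteq> e \<Longrightarrow> deg b \<ge> 1"
  using deg_eq_0_iff by (metis less_one not_le)

lemma deg_fst_le: "p \<in> Poly_Mapping.keys (cop a) \<Longrightarrow> deg (fst p) \<le> deg a"
  using deg_cop by (metis le_add1 prod.collapse)

text \<open>From \<open>(id \<otimes> \<epsilon>) \<Delta> = id\<close>: in left degree \<open>deg v\<close> only \<open>\<H>\<^sub>0 = \<complex> 1\<close> occurs on the right.\<close>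

lemma lookup_cop_right_unit:
  assumes "deg w = deg v"
  shows "Poly_Mapping.lookup (cop v) (w, e) = (if w = v then 1 else 0)"
proof -
  let ?L = "Poly_Mapping.lookup (cop v)"
  let ?g = "\<lambda>(u, v). pm_smult (cou v) (bvec u)"
  have "Poly_Mapping.lookup (bvec v) w =
      (\<Sum>p\<in>Poly_Mapping.keys (cop v). ?L p * Poly_Mapping.lookup (?g p) w)"
    by (subst counit_right [of v, symmetric]) (simp add: lookup_pm_lext)
  also have "\<dots> = (\<Sum>p\<in>Poly_Mapping.keys (cop v). if p = (w, e) then ?L p else 0)"
  proof (rule sum.cong [OF refl])
    fix p assume p: "p \<in> Poly_Mapping.keys (cop v)"
    obtain w' u where p_eq: "p = (w', u)" by (cases p)
    show "?L p * Poly_Mapping.lookup (?g p) w = (if p = (w, e) then ?L p else 0)"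
    proof (cases "w' = w")
      case True
      have "deg w' + deg u = deg v"
        using deg_cop p by (simp add: p_eq)
      then have "deg u = 0"
        using assms True by simp
      then have "u = e"
        by (simp add: deg_eq_0_iff)
      then show ?thesis using True p_eq counit_unit by (simp add: lookup_bvec)
    qed (auto simp: p_eq lookup_bvec)
  qed
  also have "\<dots> = ?L (w, e)"
    by (simp add: in_keys_iff)
  finally show ?thesis by (simp add: lookup_bvec)
qed

lemma deg_fst_cop_minus_right_unit:
  assumes "p \<in> Poly_Mapping.keys (cop a - bvec (a, e))"
  shows "deg (fst p) < deg a"
proof -
  obtain u w where p_eq: "p = (u, w)" by (cases p)
  have lookup_ne: "Poly_Mapping.lookup (cop a) (u, w) \<noteq> (if (u, w) = (a, e) then 1 else 0)"
    using assms by (simp add: p_eq in_keys_iff lookup_minus lookup_bvec)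
  have "(u, w) \<in> Poly_Mapping.keys (cop a)"
    using lookup_ne by (auto simp: in_keys_iff lookup_cop_right_unit split: if_splits)
  then have deg_sum: "deg u + deg w = deg a" by (rule deg_cop)
  have "w \<noteq> e"
  proof
    assume "w = e"
    with deg_sum have "deg u = deg a" by (simp add: deg_unit)
    with lookup_ne \<open>w = e\<close> show False by (simp add: lookup_cop_right_unit)
  qed
  with deg_sum deg_ge_1 [of w] show ?thesis by (simp add: p_eq)
qed

lemma deg_fst_red_cop:
  assumes "deg a \<ge> 1" and "p \<in> Poly_Mapping.keys (red_cop cop e a)"
  shows "deg (fst p) < deg a"
proof -
  have "p \<in> Poly_Mapping.keys (cop a - bvec (a, e)) \<or> p = (e, a)"
    using assms(2) keys_diff [of "cop a - bvec (a, e)" "bvec (e, a)"] by (auto simp: red_cop_def)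
  then show ?thesis
    using deg_fst_cop_minus_right_unit assms(1) deg_unit by fastforce
qed

end

locale birkhoff_recursion = graded_connected_hopf deg mu e cop cou ant
  for deg :: "'b \<Rightarrow> nat" and mu e cop cou ant +
  fixes z0 :: complex and phi phim phip :: "'b \<Rightarrow> complex fls"
  assumes phi: "unital_alg_hom_R z0 mu e phi"
    and phim_unit: "phim e = 1" and phip_unit: "phip e = 1"
    and phim_rec: "\<And>b. deg b \<ge> 1 \<Longrightarrow>
        phim b = - T (phi b + m_tensor phim phi (red_cop cop e b))"
    and phip_rec: "\<And>b. deg b \<ge> 1 \<Longrightarrow>
        phip b = phi b + phim b + m_tensor phim phi (red_cop cop e b)"
begin

lemma phi_germ: "phi b \<in> germs z0"
  using phi by (simp add: unital_alg_hom_R_def)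

lemma phi_unit: "phi e = 1"
  using phi by (simp add: unital_alg_hom_R_def)

lemma phi_mu: "r_lext phi (mu a b) = phi a * phi b"
  using phi unfolding unital_alg_hom_R_def by (metis hmul_def pm_lext_bvec r_lext_bvec)

lemma cop_eq_red_cop: "cop c = bvec (c, e) + bvec (e, c) + red_cop cop e c"
  unfolding red_cop_def diff_diff_eq
  by (simp only: add.commute [of "bvec (c, e) + bvec (e, c)"] diff_add_cancel)

lemma m_tensor_cop: "m_tensor phim phi (cop c) = phip c"
proof (cases "c = e")
  case True
  then show ?thesis by (simp add: cop_unit m_tensor_bvec phim_unit phi_unit phip_unit)
next
  case False
  then have "deg c \<ge> 1" by (rule deg_ge_1)
  have "m_tensor phim phi (cop c) = phim c * phi e + phim e * phi c + m_tensor phim phi (red_cop cop e c)"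
    by (subst cop_eq_red_cop) (simp add: m_tensor_add m_tensor_bvec)
  then show ?thesis
    using phip_rec [OF \<open>deg c \<ge> 1\<close>] by (simp add: phim_unit phi_unit add_ac)
qed

lemma phip_convolution: "r_lext phip x = convolution cop phim phi x"
  by (simp add: convolution_eq_r_lext m_tensor_cop)

lemma m_tensor_cop_minus_right_unit: "m_tensor phim phi (cop a - bvec (a, e)) = phip a - phim a"
  by (simp add: m_tensor_diff m_tensor_cop m_tensor_bvec phi_unit)

lemma phim_eq_neg_T: "deg c \<ge> 1 \<Longrightarrow> phim c = - T (phip c - phim c)"
  using phim_rec phip_rec by simp

lemma r_lext_phim_eq_neg_T:
  assumes "\<And>c. c \<in> Poly_Mapping.keys x \<Longrightarrow> deg c \<ge> 1"
  shows "r_lext phim x = - T (r_lext phip x - r_lext phim x)"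
proof -
  have "r_lext phim x = r_lext (\<lambda>c. - T (phip c - phim c)) x"
    by (intro r_lext_cong phim_eq_neg_T assms)
  also have "\<dots> = - T (r_lext phip x - r_lext phim x)"
    by (simp only: r_lext_fun_uminus r_lext_T r_lext_fun_diff)
  finally show ?thesis .
qed

lemma phim_polar: "deg c \<ge> 1 \<Longrightarrow> fls_polar (phim c)"
  by (simp add: phim_rec fls_polar_def fls_nth_T)

lemma phip_regular: "fls_regular (phip c)"
proof (cases "c = e")
  case True
  then show ?thesis by (simp add: phip_unit fls_regular_def)
next
  case False
  then have "phip c = (phi c + m_tensor phim phi (red_cop cop e c))
      - T (phi c + m_tensor phim phi (red_cop cop e c))"
    using phip_rec phim_rec deg_ge_1 by simp
  then show ?thesis by (simp add: fls_regular_diff_T)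
qed

lemma phim_germ: "phim c \<in> germs z0"
proof (induction "deg c" arbitrary: c rule: less_induct)
  case less
  show ?case
  proof (cases "c = e")
    case True
    then show ?thesis using germs_const[of 1] by (simp add: phim_unit)
  next
    case False
    then have "deg c \<ge> 1" by (rule deg_ge_1)
    moreover have "m_tensor phim phi (red_cop cop e c) \<in> germs z0"
      unfolding m_tensor_eq_r_lext
      by (intro germs_r_lext germs_mult phi_germ less deg_fst_red_cop \<open>deg c \<ge> 1\<close>)
    ultimately show ?thesis
      by (simp add: phim_rec germs_uminus germs_T germs_add phi_germ)
  qed
qed

lemma phip_germ: "phip c \<in> germs z0"
proof -
  have "m_tensor phim phi (cop c) \<in> germs z0"
    unfolding m_tensor_eq_r_lext by (intro germs_r_lext germs_mult phi_germ phim_germ)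
  then show ?thesis by (simp add: m_tensor_cop)
qed

lemma r_lext_phip_mu: "r_lext phip (mu a b) = m_tensor phim phi (tmul mu (cop a) (cop b))"
proof -
  have "r_lext phip (mu a b) = r_lext (\<lambda>c. m_tensor phim phi (cop c)) (mu a b)"
    by (simp add: m_tensor_cop)
  also have "\<dots> = m_tensor phim phi (pm_lext cop (mu a b))"
    by (simp add: m_tensor_eq_r_lext r_lext_pm_lext)
  also have "pm_lext cop (mu a b) = tmul mu (cop a) (cop b)"
    using Delta_hmul [of "bvec a" "bvec b"] by (simp add: hmul_def Delta_def)
  finally show ?thesis .
qed

text \<open>Split \<open>\<Delta>(a) = a \<otimes> 1 + A\<close> and \<open>\<Delta>(b) = b \<otimes> 1 + B\<close>; the left factors of \<open>A\<close> and \<open>B\<close> have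
  lower degree, so the hypothesis applies to every term except \<open>(a \<otimes> 1)(b \<otimes> 1)\<close>.\<close>

lemma phip_minus_phim_mu:
  assumes IH: "\<And>a' b'. deg a' + deg b' < deg a + deg b \<Longrightarrow>
      r_lext phim (mu a' b') = phim a' * phim b'"
  shows "r_lext phip (mu a b) - r_lext phim (mu a b) = phip a * phip b - phim a * phim b"
proof -
  let ?m = "m_tensor phim phi" and ?A = "cop a - bvec (a, e)" and ?B = "cop b - bvec (b, e)"
  have unit_part: "?m (tmul mu (bvec (a, e)) (bvec (b, e))) = r_lext phim (mu a b)"
    by (simp add: m_tensor_tmul mu_unit_left phi_unit)
  have left_part: "?m (tmul mu (bvec (a, e)) ?B) = phim a * (phip b - phim b)"
  proof -
    have "r_lext phim (mu a (fst q)) = phim a * phim (fst q)" if "q \<in> Poly_Mapping.keys ?B" for q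
      using deg_fst_cop_minus_right_unit [OF that] by (intro IH) simp
    then have "?m (tmul mu (bvec (a, e)) ?B) = ?m (bvec (a, e)) * ?m ?B"
      by (intro m_tensor_tmul_multiplicative) (auto simp: phi_mu)
    then show ?thesis
      by (simp add: m_tensor_bvec phi_unit m_tensor_cop_minus_right_unit)
  qed
  have right_part: "?m (tmul mu ?A (cop b)) = (phip a - phim a) * phip b"
  proof -
    have "r_lext phim (mu (fst p) (fst q)) = phim (fst p) * phim (fst q)"
      if "p \<in> Poly_Mapping.keys ?A" and "q \<in> Poly_Mapping.keys (cop b)" for p q
      using deg_fst_cop_minus_right_unit [OF that(1)] deg_fst_le [OF that(2)] by (intro IH) simp
    then have "?m (tmul mu ?A (cop b)) = ?m ?A * ?m (cop b)"
      by (intro m_tensor_tmul_multiplicative) (auto simp: phi_mu)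
    then show ?thesis
      by (simp add: m_tensor_cop m_tensor_cop_minus_right_unit)
  qed
  have "cop a = bvec (a, e) + ?A" and "cop b = bvec (b, e) + ?B"
    by simp_all
  then have "r_lext phip (mu a b) =
      r_lext phim (mu a b) + phim a * (phip b - phim b) + (phip a - phim a) * phip b"
    using unit_part left_part right_part unfolding r_lext_phip_mu
    by (metis m_tensor_tmul_add_left m_tensor_tmul_add_right add.assoc)
  then show ?thesis
    by (simp add: algebra_simps)
qed

lemma phim_mu: "r_lext phim (mu a b) = phim a * phim b"
proof (induction "deg a + deg b" arbitrary: a b rule: less_induct)
  case less
  show ?case
  proof (cases "a = e \<or> b = e")
    case True
    then show ?thesis by (auto simp: mu_unit_left mu_unit_right phim_unit)
  next
    case False
    then have deg_a: "deg a \<ge> 1" and deg_b: "deg b \<ge> 1"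
      using deg_ge_1 by auto
    have "r_lext phim (mu a b) = - T (r_lext phip (mu a b) - r_lext phim (mu a b))"
      using deg_mu deg_a by (intro r_lext_phim_eq_neg_T) fastforce
    also have "\<dots> = T (phim a * phim b) - T (phip a * phip b)"
      using less by (subst phip_minus_phim_mu) (auto simp: T_diff)
    also have "T (phim a * phim b) = phim a * phim b"
      by (intro T_fls_polar fls_polar_mult phim_polar deg_a deg_b)
    also have "T (phip a * phip b) = 0"
      by (intro T_fls_regular fls_regular_mult phip_regular)
    finally show ?thesis by simp
  qed
qed

lemma unital_alg_hom_phim: "unital_alg_hom_R z0 mu e phim"
  unfolding unital_alg_hom_R_def
  by (simp add: phim_germ phim_unit phim_mu r_lext_hmul_multiplicative)

lemma unital_alg_hom_phip: "unital_alg_hom_R z0 mu e phip"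
proof -
  have "r_lext phip (hmul mu x y) = r_lext phip x * r_lext phip y" for x y
    by (simp add: phip_convolution convolution_def Delta_hmul
        m_tensor_tmul_multiplicative phim_mu phi_mu)
  then show ?thesis
    by (simp add: unital_alg_hom_R_def phip_germ phip_unit)
qed

lemma r_lext_phim_Rminus:
  assumes "\<And>c. c \<in> Poly_Mapping.keys x \<Longrightarrow> deg c \<ge> 1"
  shows "r_lext phim x \<in> Rminus z0"
  unfolding Rminus_iff
  by (intro conjI germs_r_lext phim_germ fls_polar_r_lext phim_polar assms)

lemma r_lext_phip_Rplus: "r_lext phip x \<in> Rplus z0"
  unfolding Rplus_iff
  by (intro conjI germs_r_lext phip_germ fls_regular_r_lext phip_regular)

end

theorem mainTheorem1:
  fixes deg :: "'b \<Rightarrow> nat" and mu :: "'b \<Rightarrow> 'b \<Rightarrow> ('b \<Rightarrow>\<^sub>0 complex)" and e :: 'b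
    and cop :: "'b \<Rightarrow> ('b \<times> 'b \<Rightarrow>\<^sub>0 complex)" and cou :: "'b \<Rightarrow> complex"
    and ant :: "'b \<Rightarrow> ('b \<Rightarrow>\<^sub>0 complex)"
    and z0 :: complex and phi phim phip :: "'b \<Rightarrow> complex fls"
  assumes hopf: "graded_connected_comm_hopf deg mu e cop cou ant"
    and phi: "unital_alg_hom_R z0 mu e phi"
    and phim_unit: "phim e = 1" and phip_unit: "phip e = 1"
    and phim_rec: "\<And>b. deg b \<ge> 1 \<Longrightarrow>
        phim b = - T (phi b + m_tensor phim phi (red_cop cop e b))"
    and phip_rec: "\<And>b. deg b \<ge> 1 \<Longrightarrow>
        phip b = phi b + phim b + m_tensor phim phi (red_cop cop e b)"
  shows "unital_alg_hom_R z0 mu e phim \<and> unital_alg_hom_R z0 mu e phip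
    \<and> (\<forall>x. (\<exists>n\<ge>1. \<forall>b\<in>Poly_Mapping.keys x. deg b = n) \<longrightarrow> r_lext phim x \<in> Rminus z0)
    \<and> (\<forall>x. r_lext phip x \<in> Rplus z0)
    \<and> (\<forall>x. r_lext phip x = convolution cop phim phi x)"
proof -
  interpret birkhoff_recursion deg mu e cop cou ant z0 phi phim phip
    by unfold_locales (fact assms)+
  have "r_lext phim x \<in> Rminus z0" if "\<exists>n\<ge>1. \<forall>b\<in>Poly_Mapping.keys x. deg b = n" for x
    using that by (intro r_lext_phim_Rminus) auto
  then show ?thesis
    using unital_alg_hom_phim unital_alg_hom_phip r_lext_phip_Rplus phip_convolution by blast
qed

end
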